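(* For all integers $k\ge1$ and generic $a,b,c$, the polynomials $Q_k^{(2)}(n;a;b,c)=\sum_{j=0}^k\frac{(-n)_j(n+a)_j(-k)_j}{j!(b)_j(c)_j}$ satisfy $$abc\,\frac{n+\frac a2}{\frac a2}\,Q_k^{(2)}(n;a;b,c)=(n+a)(n+b)(n+c)\,Q_{k-1}^{(2)}(n;a+1;b+1,c+1)+n(n+a-b)(n+a-c)\,Q_{k-1}^{(2)}(n-1;a+1;b+1,c+1).$$
   Context: $(c)_n$ denotes the Pochhammer symbol, $(c)_0=1$. *)

theory Defs
  imports Complex_Main
begin

definition Q2 :: "nat \<Rightarrow> complex \<Rightarrow> complex \<Rightarrow> complex \<Rightarrow> complex \<Rightarrow> complex" where
  "Q2 k n a b c = (\<Sum>j=0..k. pochhammer (-n) j * pochhammer (n + a) j * pochhammer (- of_nat k) j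
        / (fact j * pochhammer b j * pochhammer c j))"

end

theory Submission
  imports Defs
begin

text \<open>Let \<open>t j\<close> be the \<open>j\<close>-th summand of \<open>Q2 k n a b c\<close>, and \<open>u j\<close>, \<open>v j\<close> those of the two
  shifted polynomials on the right-hand side. The contiguity relations of the Pochhammer symbol
  express \<open>u j\<close>, \<open>v j\<close> and \<open>t (j+1)\<close> as rational multiples of \<open>t j\<close>, and a polynomial identity
  then shows that \<open>k ((n+a)(n+b)(n+c) u j + n(n+a-b)(n+a-c) v j - (2n+a)bc t j) = H (j+1) - H j\<close>
  with \<open>H j = j (2n+a) bc t j\<close>. Summing over \<open>0 \<le> j \<le> k\<close> telescopes to \<open>H (k+1) - H 0 = 0\<close>,
  since the factor \<open>(-k)\<^sub>j\<close> makes \<open>t\<close> vanish beyond \<open>k\<close>.\<close>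

lemma pochhammer_shift:
  "z * pochhammer (z + 1) j = (z + of_nat j) * pochhammer z j"
  using pochhammer_rec[of z j] pochhammer_rec'[of z j] by simp

lemma pochhammer_Suc_neq_0D:
  fixes b :: "'a::idom"
  assumes "pochhammer b (Suc j) \<noteq> 0"
  shows "b \<noteq> 0" "b + of_nat j \<noteq> 0" "pochhammer b j \<noteq> 0"
  using assms pochhammer_rec[of b j] pochhammer_rec'[of b j] by auto

definition hyp3 :: "'a::field_char_0 \<Rightarrow> 'a \<Rightarrow> 'a \<Rightarrow> 'a \<Rightarrow> 'a \<Rightarrow> nat \<Rightarrow> 'a" where
  "hyp3 x y z b c j = pochhammer x j * pochhammer y j * pochhammer z j
                      / (fact j * pochhammer b j * pochhammer c j)"

lemma hyp3_commute: "hyp3 x y z b c j = hyp3 y x z b c j"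
  by (simp add: hyp3_def ac_simps)

lemma Q2_eq_sum_hyp3: "Q2 k n a b c = (\<Sum>j=0..k. hyp3 (-n) (n + a) (- of_nat k) b c j)"
  by (simp add: Q2_def hyp3_def)

lemma hyp3_terminating: "m < j \<Longrightarrow> hyp3 x y (- of_nat m) b c j = 0"
  by (simp add: hyp3_def pochhammer_of_nat_eq_0_iff)

lemma sum_hyp3_terminating:
  assumes "m \<le> N"
  shows "(\<Sum>j=0..N. hyp3 x y (- of_nat m) b c j) = (\<Sum>j=0..m. hyp3 x y (- of_nat m) b c j)"
  using assms by (intro sum.mono_neutral_right) (auto simp: hyp3_terminating)

lemma hyp3_Suc:
  assumes "pochhammer b (Suc j) \<noteq> 0" "pochhammer c (Suc j) \<noteq> 0"
  shows "of_nat (Suc j) * (b + of_nat j) * (c + of_nat j) * hyp3 x y z b c (Suc j)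
       = (x + of_nat j) * (y + of_nat j) * (z + of_nat j) * hyp3 x y z b c j"
proof -
  have nz: "of_nat (Suc j) * (b + of_nat j) * (c + of_nat j) \<noteq> (0 :: 'a)"
    using pochhammer_Suc_neq_0D[OF assms(1)] pochhammer_Suc_neq_0D[OF assms(2)]
    by (simp del: of_nat_Suc)
  have "hyp3 x y z b c (Suc j)
      = (x + of_nat j) * (y + of_nat j) * (z + of_nat j) * hyp3 x y z b c j
        / (of_nat (Suc j) * (b + of_nat j) * (c + of_nat j))"
    by (simp add: hyp3_def pochhammer_rec' fact_Suc mult_ac del: of_nat_Suc)
  then show ?thesis
    using nz by (simp add: field_simps del: of_nat_Suc)
qed

lemma hyp3_contiguous:
  assumes "pochhammer b (Suc j) \<noteq> 0" "pochhammer c (Suc j) \<noteq> 0"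
  shows "y * z * (b + of_nat j) * (c + of_nat j) * hyp3 x (y + 1) (z + 1) (b + 1) (c + 1) j
       = b * c * (y + of_nat j) * (z + of_nat j) * hyp3 x y z b c j"
proof -
  define B C where "B = b + of_nat j" and "C = c + of_nat j"
  have nz: "b \<noteq> 0" "c \<noteq> 0" "B \<noteq> 0" "C \<noteq> 0" "pochhammer b j \<noteq> 0" "pochhammer c j \<noteq> 0"
    using pochhammer_Suc_neq_0D[OF assms(1)] pochhammer_Suc_neq_0D[OF assms(2)]
    by (simp_all add: B_def C_def)
  have pb: "pochhammer (b + 1) j = B * pochhammer b j / b"
    and pc: "pochhammer (c + 1) j = C * pochhammer c j / c"
    using pochhammer_shift[of b j] pochhammer_shift[of c j] nz by (simp_all add: B_def C_def field_simps)
  have "y * z * B * C * hyp3 x (y + 1) (z + 1) (b + 1) (c + 1) j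
      = pochhammer x j * (y * pochhammer (y + 1) j) * (z * pochhammer (z + 1) j) * B * C
        / (fact j * pochhammer (b + 1) j * pochhammer (c + 1) j)"
    by (simp add: hyp3_def mult_ac)
  also have "\<dots> = pochhammer x j * ((y + of_nat j) * pochhammer y j) * ((z + of_nat j) * pochhammer z j)
        * B * C / (fact j * (B * pochhammer b j / b) * (C * pochhammer c j / c))"
    by (simp only: pochhammer_shift pb pc)
  also have "\<dots> = b * c * (y + of_nat j) * (z + of_nat j) * hyp3 x y z b c j"
    using nz unfolding hyp3_def by (simp add: field_simps)
  finally show ?thesis
    by (simp only: B_def C_def)
qed

lemma hyp3_combination_telescopes:
  fixes n a b c z :: "'a::field_char_0" and j :: nat
  assumes "pochhammer b (Suc j) \<noteq> 0" "pochhammer c (Suc j) \<noteq> 0"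
  defines "t \<equiv> hyp3 (-n) (n + a) z b c"
    and "H \<equiv> \<lambda>j. of_nat j * (2 * n + a) * b * c * hyp3 (-n) (n + a) z b c j"
  shows "- z * ((n + a) * (n + b) * (n + c) * hyp3 (-n) (n + a + 1) (z + 1) (b + 1) (c + 1) j
              + n * (n + a - b) * (n + a - c) * hyp3 (n + a) (- n + 1) (z + 1) (b + 1) (c + 1) j
              - (2 * n + a) * b * c * t j)
       = H (Suc j) - H j"
proof -
  define J where "J = (of_nat j :: 'a)"
  define D where "D = (b + J) * (c + J)"
  have "D \<noteq> 0"
    using pochhammer_Suc_neq_0D[OF assms(1)] pochhammer_Suc_neq_0D[OF assms(2)] by (simp add: D_def J_def)
  have u: "(n + a) * z * D * hyp3 (-n) (n + a + 1) (z + 1) (b + 1) (c + 1) j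
         = b * c * (n + a + J) * (z + J) * t j"
    using hyp3_contiguous[OF assms(1,2), of "n + a" z "-n"]
    by (simp add: t_def D_def J_def ac_simps)
  have v: "(- n) * z * D * hyp3 (n + a) (- n + 1) (z + 1) (b + 1) (c + 1) j
         = b * c * (J - n) * (z + J) * t j"
    using hyp3_contiguous[OF assms(1,2), of "-n" z "n + a"]
    unfolding t_def hyp3_commute[of "n + a" "-n" z b c j] by (simp add: D_def J_def ac_simps)
  have t: "of_nat (Suc j) * D * t (Suc j) = (J - n) * (n + a + J) * (z + J) * t j"
    using hyp3_Suc[OF assms(1,2), of "-n" "n + a" z]
    by (simp add: t_def D_def J_def ac_simps del: of_nat_Suc)
  have "D * (- z * ((n + a) * (n + b) * (n + c) * hyp3 (-n) (n + a + 1) (z + 1) (b + 1) (c + 1) j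
              + n * (n + a - b) * (n + a - c) * hyp3 (n + a) (- n + 1) (z + 1) (b + 1) (c + 1) j
              - (2 * n + a) * b * c * t j))
      = - (n + b) * (n + c) * ((n + a) * z * D * hyp3 (-n) (n + a + 1) (z + 1) (b + 1) (c + 1) j)
        + (n + a - b) * (n + a - c) * ((- n) * z * D * hyp3 (n + a) (- n + 1) (z + 1) (b + 1) (c + 1) j)
        + z * (2 * n + a) * b * c * D * t j"
    by (simp add: algebra_simps)
  also have "\<dots> = b * c * t j * (- (n + b) * (n + c) * (n + a + J) * (z + J)
                   + (n + a - b) * (n + a - c) * (J - n) * (z + J) + z * (2 * n + a) * D)"
    unfolding u v by (simp add: algebra_simps)
  also have "\<dots> = b * c * t j * ((2 * n + a) * (J - n) * (n + a + J) * (z + J) - J * (2 * n + a) * D)"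
    by (simp add: D_def algebra_simps)
  also have "\<dots> = (2 * n + a) * b * c * (of_nat (Suc j) * D * t (Suc j)) - J * (2 * n + a) * b * c * D * t j"
    unfolding t by (simp add: algebra_simps)
  also have "\<dots> = D * (H (Suc j) - H j)"
    by (simp add: H_def t_def J_def algebra_simps)
  finally show ?thesis
    using \<open>D \<noteq> 0\<close> mult_left_cancel by blast
qed

lemma sum_hyp3_combination:
  fixes n a b c :: "'a::field_char_0"
  assumes "\<And>m::nat. b \<noteq> - of_nat m" "\<And>m::nat. c \<noteq> - of_nat m"
  shows "of_nat k * ((n + a) * (n + b) * (n + c)
             * (\<Sum>j=0..k. hyp3 (-n) (n + a + 1) (- of_nat k + 1) (b + 1) (c + 1) j)
           + n * (n + a - b) * (n + a - c)
             * (\<Sum>j=0..k. hyp3 (n + a) (- n + 1) (- of_nat k + 1) (b + 1) (c + 1) j))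
       = of_nat k * ((2 * n + a) * b * c * (\<Sum>j=0..k. hyp3 (-n) (n + a) (- of_nat k) b c j))"
proof -
  define z where "z = - (of_nat k :: 'a)"
  define t where "t = hyp3 (-n) (n + a) z b c"
  define u where "u = hyp3 (-n) (n + a + 1) (z + 1) (b + 1) (c + 1)"
  define v where "v = hyp3 (n + a) (- n + 1) (z + 1) (b + 1) (c + 1)"
  define H where "H = (\<lambda>j. of_nat j * (2 * n + a) * b * c * t j)"
  have "pochhammer b (Suc j) \<noteq> 0" "pochhammer c (Suc j) \<noteq> 0" for j
    using assms by (auto simp: pochhammer_eq_0_iff)
  then have "(\<Sum>j=0..k. - z * ((n + a) * (n + b) * (n + c) * u j
                               + n * (n + a - b) * (n + a - c) * v j - (2 * n + a) * b * c * t j))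
           = (\<Sum>j=0..k. H (Suc j) - H j)"
    unfolding t_def u_def v_def H_def by (intro sum.cong refl hyp3_combination_telescopes)
  also have "\<dots> = H (Suc k) - H 0"
    by (rule sum_Suc_diff) simp
  also have "\<dots> = 0"
    by (simp add: H_def t_def z_def hyp3_terminating del: of_nat_Suc)
  finally show ?thesis
    by (simp add: z_def t_def u_def v_def sum_distrib_left sum_subtractf sum.distrib algebra_simps)
qed

theorem mainTheorem14:
  fixes k :: nat and n a b c :: complex
  assumes "k \<ge> 1"
    and "a \<noteq> 0"
    and "\<And>m::nat. b \<noteq> - of_nat m"
    and "\<And>m::nat. c \<noteq> - of_nat m"
  shows "a * b * c * ((n + a / 2) / (a / 2)) * Q2 k n a b c
       = (n + a) * (n + b) * (n + c) * Q2 (k - 1) n (a + 1) (b + 1) (c + 1)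
         + n * (n + a - b) * (n + a - c) * Q2 (k - 1) (n - 1) (a + 1) (b + 1) (c + 1)"
proof -
  have k_pred: "- of_nat k + 1 = - (of_nat (k - 1) :: complex)"
    using assms(1) by (simp add: of_nat_diff)
  have "Q2 (k - 1) n (a + 1) (b + 1) (c + 1)
      = (\<Sum>j=0..k. hyp3 (-n) (n + a + 1) (- of_nat k + 1) (b + 1) (c + 1) j)"
    and "Q2 (k - 1) (n - 1) (a + 1) (b + 1) (c + 1)
      = (\<Sum>j=0..k. hyp3 (n + a) (- n + 1) (- of_nat k + 1) (b + 1) (c + 1) j)"
    unfolding k_pred sum_hyp3_terminating[of "k - 1" k, OF diff_le_self] Q2_eq_sum_hyp3
      hyp3_commute[of "- (n - 1)" "n - 1 + (a + 1)"]
    by (simp_all add: algebra_simps)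
  moreover have "a * b * c * ((n + a / 2) / (a / 2)) = (2 * n + a) * b * c"
    using assms(2) by (simp add: field_simps)
  moreover have "(of_nat k :: complex) \<noteq> 0"
    using assms(1) by simp
  ultimately show ?thesis
    using sum_hyp3_combination[OF assms(3,4), of k n a] by (simp add: Q2_eq_sum_hyp3)
qed

end
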